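(* Consider $2$ agents with additive, identical, normalized valuations, and online algorithms that have no access to predictions. For any given $a \in (\varphi - 1, 1]$, where $\varphi = \frac{1+\sqrt{5}}{2}$, there is no online algorithm that guarantees an $a$-EFX allocation, even if the time horizon $T$ is known to the algorithm in advance.
   Context: Online fair division model: there is a set $N=[n]$ of agents and goods $g_1,\dots,g_T$ that arrive one per time step $t=1,\dots,T$. Each agent $i$ has an additive normalized valuation $v_i$: $v_i(g_t)\ge 0$, $\sum_{t=1}^T v_i(g_t)=1$, and $v_i(S)=\sum_{g\in S} v_i(g)$. Valuations are identical if $v_i=v$ for all agents. When good $g_t$ arrives, its true values $v_i(g_t)$ for all agents are revealed and the algorithm must immediately and irrevocably allocate $g_t$ to one agent. An allocation $A=(A_1,\dots,A_n)$ is a partition of the goods. For a bundle $S\neq\emptyset$ and valuation $f$, let $\bar S^f = S\setminus\{g\}$ where $g\in\arg\max_{g'\in S} f(S\setminus\{g'\})$ (i.e. a least valuable good is removed), and $\bar\emptyset^f=\emptyset$. For $a\in[0,1]$, the allocation is $a$-EFX (with respect to valuations $f_i$) if $f_i(A_i)\ge a\cdot f_i(\bar{A_j}^{f_i})$ for all agents $i,j$. An algorithm guarantees an $a$-EFX allocation if, for every admissible input sequence, the final allocation after all goods have arrived is $a$-EFX with respect to the true valuations. *)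

theory Defs
  imports Complex_Main
begin

text \<open>Goods are indexed by natural numbers (good g_{t+1} is index t).
  bar S f: S with a least valuable good removed (a maximiser of f(S - {g'})).\<close>
definition remove_least :: "(nat \<Rightarrow> real) \<Rightarrow> nat set \<Rightarrow> nat set" where
  "remove_least f S =
     (if S = {} then {}
      else S - {SOME g. g \<in> S \<and> (\<forall>g'\<in>S. sum f (S - {g'}) \<le> sum f (S - {g}))})"

definition a_EFX :: "real \<Rightarrow> ('i \<Rightarrow> nat \<Rightarrow> real) \<Rightarrow> ('i \<Rightarrow> nat set) \<Rightarrow> bool" where
  "a_EFX a f A \<longleftrightarrow> (\<forall>i j. sum (f i) (A i) \<ge> a * sum (f i) (remove_least (f i) (A j)))"

text \<open>Deterministic online algorithm for two agents (agents = bool) with identical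
  valuations and known horizon: given T and the values of the goods arrived so far
  (including the current one), it returns the agent receiving the current good.\<close>
definition online_alloc :: "(nat \<Rightarrow> real list \<Rightarrow> bool) \<Rightarrow> nat \<Rightarrow> real list \<Rightarrow> bool \<Rightarrow> nat set" where
  "online_alloc alg T vs = (\<lambda>i. {t. t < T \<and> alg T (take (Suc t) vs) = i})"

definition admissible :: "nat \<Rightarrow> real list \<Rightarrow> bool" where
  "admissible T vs \<longleftrightarrow> length vs = T \<and> (\<forall>x\<in>set vs. 0 \<le> x) \<and> sum_list vs = 1"

end

theory Submission
  imports Defs
begin

text \<open>The adversary uses four goods. The first is worthless, the second has value x with
  (1 - a)/(1 + a) < x < a/(2 + a); this window is nonempty exactly when a^2 + a > 1, i.e.
  a > \<phi> - 1. If the algorithm gives the first two goods to the same agent, two goods of value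
  (1 - x)/2 follow; otherwise a worthless good and one of value 1 - x follow. The algorithm
  must commit before seeing which continuation comes, and in either case, however the last
  two goods are allocated, some agent values its bundle below a times the other bundle minus
  one of its goods. Removing the worthless good costs its holder nothing, so EFX towards
  that agent is as strict as envy-freeness.\<close>

lemma sum_remove_least_ge:
  assumes "finite S" "g \<in> S"
  shows "sum f S - f g \<le> sum f (remove_least f S)"
proof -
  let ?h = "\<lambda>g'. sum f (S - {g'})"
  let ?P = "\<lambda>g. g \<in> S \<and> (\<forall>g'\<in>S. ?h g' \<le> ?h g)"
  have "Max (?h ` S) \<in> ?h ` S"
    using assms by (intro Max_in) auto
  then obtain m where "m \<in> S" "?h m = Max (?h ` S)"
    by auto
  then have "?P m"
    using assms(1) by auto
  define g0 where "g0 = (SOME g. ?P g)"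
  have "?P g0"
    unfolding g0_def using \<open>?P m\<close> by (rule someI)
  moreover have "remove_least f S = S - {g0}"
    using assms(2) by (auto simp: remove_least_def g0_def)
  ultimately have "?h g \<le> sum f (remove_least f S)"
    using assms(2) by simp
  then show ?thesis
    using assms by (simp add: sum_diff1)
qed

lemma a_EFX_identical_sum_ge:
  assumes "a_EFX a (\<lambda>i. f) A" "0 \<le> a" "finite (A j)" "g \<in> A j"
  shows "a * (sum f (A j) - f g) \<le> sum f (A i)"
proof -
  have "a * (sum f (A j) - f g) \<le> a * sum f (remove_least f (A j))"
    using sum_remove_least_ge[OF assms(3,4)] assms(2) by (rule mult_left_mono)
  also have "\<dots> \<le> sum f (A i)"
    using assms(1) by (simp add: a_EFX_def)
  finally show ?thesis .
qed

lemma a_EFX_separates_first_two_goods: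
  fixes a x y :: real and c :: "nat \<Rightarrow> bool"
  assumes "0 < a" "0 \<le> x" "y < a * (x + y)" "x < a * y"
    and efx: "a_EFX a (\<lambda>i t. [0, x, y, y] ! t) (\<lambda>i. {t. t < 4 \<and> c t = i})"
  shows "c 1 \<noteq> c 0"
proof
  assume together: "c 1 = c 0"
  let ?v = "\<lambda>t. [0, x, y, y] ! t"
  define A where "A = (\<lambda>i. {t. t < 4 \<and> c t = i})"
  from efx have envy: "a * (sum ?v (A j) - ?v g) \<le> sum ?v (A i)" if "g \<in> A j" for i j g
    using a_EFX_identical_sum_ge[of a ?v A j g i] that assms(1) by (simp add: A_def)
  have "0 < y"
    using zero_less_mult_pos[of a y] assms(1,2,4) by linarith
  then have "0 < a * (x + 2 * y)"
    using assms(1,2) by simp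
  consider "c 2 = c 0" "c 3 = c 0" | "c 2 = c 0" "c 3 \<noteq> c 0" | "c 2 \<noteq> c 0" "c 3 = c 0"
    | "c 2 \<noteq> c 0" "c 3 \<noteq> c 0"
    by blast
  then show False
  proof cases
    case 1
    then have "A (c 0) = {0, 1, 2, 3}" "A (\<not> c 0) = {}"
      using together by (auto simp: A_def numeral_eq_Suc less_Suc_eq)
    then show False
      using envy[of 0 "c 0" "\<not> c 0"] \<open>0 < a * (x + 2 * y)\<close> by simp
  next
    case 2
    then have "A (c 0) = {0, 1, 2}" "A (\<not> c 0) = {3}"
      using together by (auto simp: A_def numeral_eq_Suc less_Suc_eq)
    then show False
      using envy[of 0 "c 0" "\<not> c 0"] assms by simp
  next
    case 3
    then have "A (c 0) = {0, 1, 3}" "A (\<not> c 0) = {2}"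
      using together by (auto simp: A_def numeral_eq_Suc less_Suc_eq)
    then show False
      using envy[of 0 "c 0" "\<not> c 0"] assms by simp
  next
    case 4
    then have "A (c 0) = {0, 1}" "A (\<not> c 0) = {2, 3}"
      using together by (auto simp: A_def numeral_eq_Suc less_Suc_eq)
    then show False
      using envy[of 2 "\<not> c 0" "c 0"] assms by simp
  qed
qed

lemma a_EFX_keeps_first_two_goods_together:
  fixes a x z :: real and c :: "nat \<Rightarrow> bool"
  assumes "0 < a" "0 \<le> x" "x < a * z"
    and efx: "a_EFX a (\<lambda>i t. [0, x, 0, z] ! t) (\<lambda>i. {t. t < 4 \<and> c t = i})"
  shows "c 1 = c 0"
proof (rule ccontr)
  assume apart: "c 1 \<noteq> c 0"
  let ?v = "\<lambda>t. [0, x, 0, z] ! t"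
  define A where "A = (\<lambda>i. {t. t < 4 \<and> c t = i})"
  from efx have envy: "a * (sum ?v (A j) - ?v g) \<le> sum ?v (A i)" if "g \<in> A j" for i j g
    using a_EFX_identical_sum_ge[of a ?v A j g i] that assms(1) by (simp add: A_def)
  have "0 \<le> a * x"
    using assms(1,2) by simp
  consider "c 2 = c 0" "c 3 = c 0" | "c 2 = c 0" "c 3 \<noteq> c 0" | "c 2 \<noteq> c 0" "c 3 = c 0"
    | "c 2 \<noteq> c 0" "c 3 \<noteq> c 0"
    by blast
  then show False
  proof cases
    case 1
    then have "A (c 0) = {0, 2, 3}" "A (\<not> c 0) = {1}"
      using apart by (auto simp: A_def numeral_eq_Suc less_Suc_eq)
    then show False
      using envy[of 0 "c 0" "\<not> c 0"] assms by simp
  next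
    case 2
    then have "A (c 0) = {0, 2}" "A (\<not> c 0) = {1, 3}"
      using apart by (auto simp: A_def numeral_eq_Suc less_Suc_eq)
    then show False
      using envy[of 1 "\<not> c 0" "c 0"] assms by simp
  next
    case 3
    then have "A (c 0) = {0, 3}" "A (\<not> c 0) = {1, 2}"
      using apart by (auto simp: A_def numeral_eq_Suc less_Suc_eq)
    then show False
      using envy[of 0 "c 0" "\<not> c 0"] assms by simp
  next
    case 4
    then have "A (c 0) = {0}" "A (\<not> c 0) = {1, 2, 3}"
      using apart by (auto simp: A_def numeral_eq_Suc less_Suc_eq)
    then show False
      using envy[of 2 "\<not> c 0" "c 0"] assms \<open>0 \<le> a * x\<close> by (simp add: algebra_simps)
  qed
qed

lemma golden_window_nonempty:
  fixes a :: real
  assumes "(1 + sqrt 5) / 2 - 1 < a" "a \<le> 1"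
  obtains x where "0 \<le> x" "1 - x < a * (1 + x)" "2 * x < a * (1 - x)"
proof -
  have "1 < sqrt 5" "sqrt 5 < 2 * a + 1"
    using assms(1) by simp_all
  then have "0 < a"
    by linarith
  have "5 < (2 * a + 1)\<^sup>2"
    using \<open>sqrt 5 < 2 * a + 1\<close> real_le_rsqrt[of "2 * a + 1" 5] by linarith
  then have "1 < a\<^sup>2 + a"
    by (simp add: power2_eq_square algebra_simps)
  with \<open>0 < a\<close> have "(1 - a) / (1 + a) < a / (2 + a)"
    by (simp add: field_simps power2_eq_square)
  then obtain x where x: "(1 - a) / (1 + a) < x" "x < a / (2 + a)"
    using dense by blast
  show thesis
  proof
    have "0 \<le> (1 - a) / (1 + a)"
      using assms(2) \<open>0 < a\<close> by simp
    then show "0 \<le> x"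
      using x(1) by linarith
    show "1 - x < a * (1 + x)" "2 * x < a * (1 - x)"
      using x \<open>0 < a\<close> by (simp_all add: field_simps)
  qed
qed

theorem theorem3p1:
  fixes a :: real
  assumes "(1 + sqrt 5) / 2 - 1 < a" and "a \<le> 1"
  shows "\<not> (\<exists>alg :: nat \<Rightarrow> real list \<Rightarrow> bool.
             \<forall>T vs. admissible T vs \<longrightarrow>
               a_EFX a (\<lambda>i t. vs ! t) (online_alloc alg T vs))"
proof
  assume "\<exists>alg :: nat \<Rightarrow> real list \<Rightarrow> bool. \<forall>T vs. admissible T vs \<longrightarrow>
            a_EFX a (\<lambda>i t. vs ! t) (online_alloc alg T vs)"
  then obtain alg :: "nat \<Rightarrow> real list \<Rightarrow> bool" where efx: "\<And>vs. admissible 4 vs \<Longrightarrow>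
      a_EFX a (\<lambda>i t. vs ! t) (\<lambda>i. {t. t < 4 \<and> alg 4 (take (Suc t) vs) = i})"
    unfolding online_alloc_def by blast
  have "1 < sqrt 5" "sqrt 5 < 2 * a + 1"
    using assms(1) by simp_all
  then have "0 < a"
    by linarith
  obtain x where x: "0 \<le> x" "1 - x < a * (1 + x)" "2 * x < a * (1 - x)"
    using assms by (rule golden_window_nonempty)
  define y where "y = (1 - x) / 2"
  have "0 < 1 - x"
    using zero_less_mult_pos[of a "1 - x"] x(1,3) \<open>0 < a\<close> by linarith
  have "admissible 4 [0, x, y, y]" "admissible 4 [0, x, 0, 1 - x]"
    using x(1) \<open>0 < 1 - x\<close> by (simp_all add: admissible_def y_def)
  moreover have "y < a * (x + y)" "x < a * y" "x < a * (1 - x)"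
    using x by (simp_all add: y_def field_simps)
  ultimately have "alg 4 [0, x] \<noteq> alg 4 [0]" "alg 4 [0, x] = alg 4 [0]"
    using a_EFX_separates_first_two_goods[OF \<open>0 < a\<close> x(1) _ _ efx]
      a_EFX_keeps_first_two_goods_together[OF \<open>0 < a\<close> x(1) _ efx]
    by simp_all
  then show False
    by simp
qed

end
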